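(* Let $\mathbb{D}$ be a virtual double category. Then $\mathbb{D}$ has decomposable multicells if and only if every multicell of $\mathbb{D}$ admits essentially unique decompositions of every shape given by a tree of height $2$ with the appropriate number of leaves.
   Context: A virtual double category (VDC) has objects, tight arrows forming a category, loose arrows $x\nrightarrow y$, and $n$-ary multicells ($n\ge0$) with a composable path of $n$ loose arrows as loose source, one loose arrow as loose target and two tight arrows as tight sides, together with identity unary multicells and an associative unital composition $\frac{\alpha_1\cdots\alpha_m}{\beta}$ pasting a compatible row of multicells onto an $m$-ary multicell (whiskering by a tight arrow when $m=0$). A tree is a rooted finite planar tree all of whose leaves are at the same distance from the root; its height is the number of layers of vertices (layer 1 contains the root). For an $m$-ary multicell $\alpha$ and a tree $T$ of height $h$ with $m$ leaves, a decomposition of $\alpha$ of shape $T$ assigns to each vertex with $k$ inputs a $k$-ary multicell, such that each layer forms a compatible row of multicells, the loose targets of layer $i+1$ are in order the loose sources of layer $i$ (interface $i$), and the iterated composite is $\alpha$. A morphism $P\to Q$ of such decompositions consists of compatible rows $\sigma_i$ ($1\le i\le h-1$) of unary multicells from interface $i$ of $P$ to interface $i$ of $Q$, with $\sigma_0,\sigma_h$ identities, such that for each layer $i$, layer $i$ of $P$ followed by $\sigma_{i-1}$ equals $\sigma_i$ followed by layer $i$ of $Q$. Two decompositions are equivalent if connected by a zigzag of morphisms. $\alpha$ admits essentially unique decompositions of shape $T$ if it has at least one and any two are equivalent. $\mathbb{D}$ has decomposable multicells if every multicell admits essentially unique decompositions of every shape of every height $\ge2$ (with the right number of leaves). *)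

theory Defs
  imports Main
begin

text \<open>Tight arrows: Tight with tdom, tcod, identities tid and composition tcomp g f (= g after f).
  Multicells: Cell with loose source csrc (a path of loose arrows starting at tdom (cleft a)
  and ending at tdom (cright a)), loose target ctgt and tight sides cleft, cright.
  A compatible row of multicells is a pair (f, cs) of a tight arrow f (its left boundary)
  and a list of multicells cs, consecutive ones sharing tight sides, with cleft (hd cs) = f
  when cs is nonempty; a row of length 0 is thus just a tight arrow.
  comp f cs b is the composite of the row (f, cs) pasted onto the multicell b
  (whiskering by f when cs is empty).\<close>

record ('o, 't, 'l, 'c) vdc =
  Ob :: "'o set"
  Tight :: "'t set"
  tdom :: "'t \<Rightarrow> 'o"
  tcod :: "'t \<Rightarrow> 'o"
  tid :: "'o \<Rightarrow> 't"
  tcomp :: "'t \<Rightarrow> 't \<Rightarrow> 't"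
  Loose :: "'l set"
  ldom :: "'l \<Rightarrow> 'o"
  lcod :: "'l \<Rightarrow> 'o"
  Cell :: "'c set"
  csrc :: "'c \<Rightarrow> 'l list"
  ctgt :: "'c \<Rightarrow> 'l"
  cleft :: "'c \<Rightarrow> 't"
  cright :: "'c \<Rightarrow> 't"
  cid :: "'l \<Rightarrow> 'c"
  comp :: "'t \<Rightarrow> 'c list \<Rightarrow> 'c \<Rightarrow> 'c"

fun is_path :: "('o, 't, 'l, 'c, 'm) vdc_scheme \<Rightarrow> 'o \<Rightarrow> 'l list \<Rightarrow> 'o \<Rightarrow> bool" where
  "is_path D x [] y = (x = y \<and> x \<in> Ob D)"
| "is_path D x (p # ps) y = (p \<in> Loose D \<and> ldom D p = x \<and> is_path D (lcod D p) ps y)"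

definition is_row :: "('o, 't, 'l, 'c, 'm) vdc_scheme \<Rightarrow> 't \<Rightarrow> 'c list \<Rightarrow> bool" where
  "is_row D f cs \<longleftrightarrow> f \<in> Tight D \<and> set cs \<subseteq> Cell D
     \<and> (cs \<noteq> [] \<longrightarrow> cleft D (hd cs) = f)
     \<and> (\<forall>j. Suc j < length cs \<longrightarrow> cright D (cs ! j) = cleft D (cs ! Suc j))"

definition row_right :: "('o, 't, 'l, 'c, 'm) vdc_scheme \<Rightarrow> 't \<Rightarrow> 'c list \<Rightarrow> 't" where
  "row_right D f cs = (if cs = [] then f else cright D (last cs))"

text \<open>The tight arrow at boundary position j of a row (0 = left boundary).\<close>
definition bnd :: "('o, 't, 'l, 'c, 'm) vdc_scheme \<Rightarrow> 't \<Rightarrow> 'c list \<Rightarrow> nat \<Rightarrow> 't" where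
  "bnd D f cs j = (if j = 0 then f else cright D (cs ! (j - 1)))"

text \<open>Offset in the upper row where the cells above the j-th cell of ds start.\<close>
definition off :: "('o, 't, 'l, 'c, 'm) vdc_scheme \<Rightarrow> 'c list \<Rightarrow> nat \<Rightarrow> nat" where
  "off D ds j = sum_list (map (\<lambda>d. length (csrc D d)) (take j ds))"

text \<open>Vertical composite of the row R (on top) with the row S (below).\<close>
definition rowcomp :: "('o, 't, 'l, 'c, 'm) vdc_scheme \<Rightarrow> 't \<times> 'c list \<Rightarrow> 't \<times> 'c list \<Rightarrow> 't \<times> 'c list" where
  "rowcomp D R S =
     (tcomp D (fst S) (fst R),
      map (\<lambda>j. comp D (bnd D (fst R) (snd R) (off D (snd S) j))
                       (take (length (csrc D (snd S ! j))) (drop (off D (snd S) j) (snd R)))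
                       (snd S ! j))
          [0..<length (snd S)])"

definition comp_ok :: "('o, 't, 'l, 'c, 'm) vdc_scheme \<Rightarrow> 't \<Rightarrow> 'c list \<Rightarrow> 'c \<Rightarrow> bool" where
  "comp_ok D f cs b \<longleftrightarrow> is_row D f cs \<and> b \<in> Cell D \<and> map (ctgt D) cs = csrc D b
     \<and> tcod D f = tdom D (cleft D b) \<and> tcod D (row_right D f cs) = tdom D (cright D b)"

definition vdc :: "('o, 't, 'l, 'c, 'm) vdc_scheme \<Rightarrow> bool" where
  "vdc D \<longleftrightarrow>
    \<comment> \<open>tight arrows form a category\<close>
    (\<forall>f \<in> Tight D. tdom D f \<in> Ob D \<and> tcod D f \<in> Ob D)
  \<and> (\<forall>x \<in> Ob D. tid D x \<in> Tight D \<and> tdom D (tid D x) = x \<and> tcod D (tid D x) = x)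
  \<and> (\<forall>f \<in> Tight D. \<forall>g \<in> Tight D. tdom D g = tcod D f \<longrightarrow>
        tcomp D g f \<in> Tight D \<and> tdom D (tcomp D g f) = tdom D f \<and> tcod D (tcomp D g f) = tcod D g)
  \<and> (\<forall>f \<in> Tight D. tcomp D f (tid D (tdom D f)) = f \<and> tcomp D (tid D (tcod D f)) f = f)
  \<and> (\<forall>f \<in> Tight D. \<forall>g \<in> Tight D. \<forall>h \<in> Tight D. tdom D g = tcod D f \<and> tdom D h = tcod D g \<longrightarrow>
        tcomp D h (tcomp D g f) = tcomp D (tcomp D h g) f)
    \<comment> \<open>loose arrows\<close>
  \<and> (\<forall>p \<in> Loose D. ldom D p \<in> Ob D \<and> lcod D p \<in> Ob D)
    \<comment> \<open>boundaries of multicells\<close>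
  \<and> (\<forall>a \<in> Cell D. cleft D a \<in> Tight D \<and> cright D a \<in> Tight D \<and> ctgt D a \<in> Loose D
        \<and> is_path D (tdom D (cleft D a)) (csrc D a) (tdom D (cright D a))
        \<and> tcod D (cleft D a) = ldom D (ctgt D a) \<and> tcod D (cright D a) = lcod D (ctgt D a))
    \<comment> \<open>identity unary multicells\<close>
  \<and> (\<forall>p \<in> Loose D. cid D p \<in> Cell D \<and> csrc D (cid D p) = [p] \<and> ctgt D (cid D p) = p
        \<and> cleft D (cid D p) = tid D (ldom D p) \<and> cright D (cid D p) = tid D (lcod D p))
    \<comment> \<open>composition and its boundaries\<close>
  \<and> (\<forall>f cs b. comp_ok D f cs b \<longrightarrow>
        comp D f cs b \<in> Cell D \<and> csrc D (comp D f cs b) = concat (map (csrc D) cs)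
        \<and> ctgt D (comp D f cs b) = ctgt D b
        \<and> cleft D (comp D f cs b) = tcomp D (cleft D b) f
        \<and> cright D (comp D f cs b) = tcomp D (cright D b) (row_right D f cs))
    \<comment> \<open>unit laws\<close>
  \<and> (\<forall>b \<in> Cell D. comp D (tid D (tdom D (cleft D b))) (map (cid D) (csrc D b)) b = b)
  \<and> (\<forall>a \<in> Cell D. comp D (cleft D a) [a] (cid D (ctgt D a)) = a)
    \<comment> \<open>associativity\<close>
  \<and> (\<forall>f es g ds b. comp_ok D g ds b \<and> is_row D f es \<and> map (ctgt D) es = concat (map (csrc D) ds)
        \<and> tcod D f = tdom D g \<and> tcod D (row_right D f es) = tdom D (row_right D g ds) \<longrightarrow>
        comp D f es (comp D g ds b) =
          comp D (fst (rowcomp D (f, es) (g, ds))) (snd (rowcomp D (f, es) (g, ds))) b)"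

text \<open>A (planar, levelled) tree of height h is the list of its h layers of vertices,
  each layer listed left to right by the number of inputs of each vertex;
  layer 1 consists of the root only and the vertices of layer i+1 are the inputs of
  the vertices of layer i.\<close>

definition valid_tree :: "nat list list \<Rightarrow> bool" where
  "valid_tree T \<longleftrightarrow> T \<noteq> [] \<and> length (T ! 0) = 1
     \<and> (\<forall>i. Suc i < length T \<longrightarrow> length (T ! Suc i) = sum_list (T ! i))"

definition tree_height :: "nat list list \<Rightarrow> nat" where
  "tree_height T = length T"

definition tree_leaves :: "nat list list \<Rightarrow> nat" where
  "tree_leaves T = sum_list (last T)"

text \<open>Iterated composite of the layers (layer 1 = P ! 0).\<close>
definition iter_comp :: "('o, 't, 'l, 'c, 'm) vdc_scheme \<Rightarrow> ('t \<times> 'c list) list \<Rightarrow> 'c" where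
  "iter_comp D P = foldl (\<lambda>acc r. comp D (fst r) (snd r) acc) (hd (snd (hd P))) (tl P)"

definition is_decomp :: "('o, 't, 'l, 'c, 'm) vdc_scheme \<Rightarrow> 'c \<Rightarrow> nat list list \<Rightarrow> ('t \<times> 'c list) list \<Rightarrow> bool" where
  "is_decomp D a T P \<longleftrightarrow> a \<in> Cell D \<and> valid_tree T \<and> length P = length T
     \<and> (\<forall>i < length T. is_row D (fst (P ! i)) (snd (P ! i))
            \<and> map (\<lambda>c. length (csrc D c)) (snd (P ! i)) = T ! i)
     \<and> (\<forall>i. Suc i < length T \<longrightarrow>
            map (ctgt D) (snd (P ! Suc i)) = concat (map (csrc D) (snd (P ! i)))
            \<and> tcod D (fst (P ! Suc i)) = tdom D (fst (P ! i))
            \<and> tcod D (row_right D (fst (P ! Suc i)) (snd (P ! Suc i)))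
                = tdom D (row_right D (fst (P ! i)) (snd (P ! i))))
     \<and> iter_comp D P = a"

definition id_row :: "('o, 't, 'l, 'c, 'm) vdc_scheme \<Rightarrow> 'o \<Rightarrow> 'l list \<Rightarrow> 't \<times> 'c list" where
  "id_row D x ps = (tid D x, map (cid D) ps)"

text \<open>Interface k (1 \<le> k \<le> h-1) of a decomposition: the loose sources of layer k,
  with their start and end objects.\<close>
definition iface :: "('o, 't, 'l, 'c, 'm) vdc_scheme \<Rightarrow> ('t \<times> 'c list) list \<Rightarrow> nat \<Rightarrow> 'o \<times> 'l list \<times> 'o" where
  "iface D P k = (tdom D (fst (P ! (k - 1))),
                  concat (map (csrc D) (snd (P ! (k - 1)))),
                  tdom D (row_right D (fst (P ! (k - 1))) (snd (P ! (k - 1)))))"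

definition row_between :: "('o, 't, 'l, 'c, 'm) vdc_scheme \<Rightarrow> 'o \<times> 'l list \<times> 'o \<Rightarrow> 'o \<times> 'l list \<times> 'o \<Rightarrow> 't \<times> 'c list \<Rightarrow> bool" where
  "row_between D A B S \<longleftrightarrow> (case A of (x, ps, y) \<Rightarrow> case B of (x', qs, y') \<Rightarrow>
      is_row D (fst S) (snd S) \<and> length (snd S) = length ps \<and> length qs = length ps
      \<and> (\<forall>j < length ps. csrc D (snd S ! j) = [ps ! j] \<and> ctgt D (snd S ! j) = qs ! j)
      \<and> tdom D (fst S) = x \<and> tcod D (fst S) = x'
      \<and> tdom D (row_right D (fst S) (snd S)) = y \<and> tcod D (row_right D (fst S) (snd S)) = y')"

text \<open>sigma is a morphism of decompositions P \<rightarrow> Q of a of shape T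
  (sigma ! i is the row sigma_i, for 0 \<le> i \<le> h).\<close>
definition decomp_morph :: "('o, 't, 'l, 'c, 'm) vdc_scheme \<Rightarrow> 'c \<Rightarrow> nat list list
    \<Rightarrow> ('t \<times> 'c list) list \<Rightarrow> ('t \<times> 'c list) list \<Rightarrow> ('t \<times> 'c list) list \<Rightarrow> bool" where
  "decomp_morph D a T P Q sigma \<longleftrightarrow>
     is_decomp D a T P \<and> is_decomp D a T Q \<and> length sigma = length T + 1
     \<and> sigma ! 0 = id_row D (ldom D (ctgt D a)) [ctgt D a]
     \<and> sigma ! length T = id_row D (tdom D (cleft D a)) (csrc D a)
     \<and> (\<forall>k. 1 \<le> k \<and> k < length T \<longrightarrow> row_between D (iface D P k) (iface D Q k) (sigma ! k))
     \<and> (\<forall>i < length T. rowcomp D (P ! i) (sigma ! i) = rowcomp D (sigma ! Suc i) (Q ! i))"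

definition has_decomp_morph :: "('o, 't, 'l, 'c, 'm) vdc_scheme \<Rightarrow> 'c \<Rightarrow> nat list list
    \<Rightarrow> ('t \<times> 'c list) list \<Rightarrow> ('t \<times> 'c list) list \<Rightarrow> bool" where
  "has_decomp_morph D a T P Q \<longleftrightarrow> (\<exists>sigma. decomp_morph D a T P Q sigma)"

definition decomp_equiv :: "('o, 't, 'l, 'c, 'm) vdc_scheme \<Rightarrow> 'c \<Rightarrow> nat list list
    \<Rightarrow> ('t \<times> 'c list) list \<Rightarrow> ('t \<times> 'c list) list \<Rightarrow> bool" where
  "decomp_equiv D a T =
     (\<lambda>P Q. has_decomp_morph D a T P Q \<or> has_decomp_morph D a T Q P)\<^sup>*\<^sup>*"

definition ess_unique_decomp :: "('o, 't, 'l, 'c, 'm) vdc_scheme \<Rightarrow> 'c \<Rightarrow> nat list list \<Rightarrow> bool" where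
  "ess_unique_decomp D a T \<longleftrightarrow> (\<exists>P. is_decomp D a T P)
     \<and> (\<forall>P Q. is_decomp D a T P \<and> is_decomp D a T Q \<longrightarrow> decomp_equiv D a T P Q)"

definition has_decomposable_multicells :: "('o, 't, 'l, 'c, 'm) vdc_scheme \<Rightarrow> bool" where
  "has_decomposable_multicells D \<longleftrightarrow>
     (\<forall>a \<in> Cell D. \<forall>T. valid_tree T \<and> tree_height T \<ge> 2 \<and> tree_leaves T = length (csrc D a)
        \<longrightarrow> ess_unique_decomp D a T)"

end

theory Submission
  imports Defs
begin

(*
  Induction on the height.  Composing all but the top layer of a decomposition of height h + 1
  yields a multicell g, which those layers decompose with height h, and a decomposition of
  height 2 (the collapse) whose lower layer is g alone.  Decompositions with the same collapse
  are equivalent: their lower parts are, by induction, and a morphism of lower parts extends by an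
  identity component on top.  A morphism between two collapses has as middle component a row
  \<sigma> of unary multicells with g1 = \<sigma> \<cdot> g2; pasting \<sigma> onto the top layer of a
  decomposition of g2 yields a decomposition of g1 together with a morphism into the original
  one, all of whose other components are identities.  So equivalent collapses have equivalent
  lifts, and lifts always exist.
*)

section \<open>Rows of multicells\<close>

lemma is_row_successively:
  "is_row D f cs \<longleftrightarrow> f \<in> Tight D \<and> set cs \<subseteq> Cell D \<and> (cs \<noteq> [] \<longrightarrow> cleft D (hd cs) = f)
     \<and> successively (\<lambda>c d. cright D c = cleft D d) cs"
  by (simp add: is_row_def successively_conv_nth)

lemma is_row_Nil [simp]: "is_row D f [] \<longleftrightarrow> f \<in> Tight D"
  by (simp add: is_row_def)

lemma is_row_Tight: "is_row D f cs \<Longrightarrow> f \<in> Tight D"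
  by (simp add: is_row_def)

lemma is_row_cells: "is_row D f cs \<Longrightarrow> set cs \<subseteq> Cell D"
  by (simp add: is_row_def)

lemma row_right_Nil [simp]: "row_right D f [] = f"
  by (simp add: row_right_def)

lemma row_right_Cons [simp]: "row_right D f (c # cs) = row_right D (cright D c) cs"
  by (simp add: row_right_def)

lemma row_right_append: "row_right D f (xs @ ys) = row_right D (row_right D f xs) ys"
  by (induction xs arbitrary: f) auto

definition row_shape :: "('o, 't, 'l, 'c, 'm) vdc_scheme \<Rightarrow> 't \<times> 'c list \<Rightarrow> nat list \<Rightarrow> bool" where
  "row_shape D p t \<longleftrightarrow> is_row D (fst p) (snd p) \<and> map (\<lambda>c. length (csrc D c)) (snd p) = t"

definition row_source :: "('o, 't, 'l, 'c, 'm) vdc_scheme \<Rightarrow> 't \<times> 'c list \<Rightarrow> 'o \<times> 'l list \<times> 'o" where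
  "row_source D p = (tdom D (fst p), concat (map (csrc D) (snd p)), tdom D (row_right D (fst p) (snd p)))"

definition row_target :: "('o, 't, 'l, 'c, 'm) vdc_scheme \<Rightarrow> 't \<times> 'c list \<Rightarrow> 'o \<times> 'l list \<times> 'o" where
  "row_target D p = (tcod D (fst p), map (ctgt D) (snd p), tcod D (row_right D (fst p) (snd p)))"

definition cell_source :: "('o, 't, 'l, 'c, 'm) vdc_scheme \<Rightarrow> 'c \<Rightarrow> 'o \<times> 'l list \<times> 'o" where
  "cell_source D a = (tdom D (cleft D a), csrc D a, tdom D (cright D a))"

definition id_row_on :: "('o, 't, 'l, 'c, 'm) vdc_scheme \<Rightarrow> 'o \<times> 'l list \<times> 'o \<Rightarrow> 't \<times> 'c list" where
  "id_row_on D A = id_row D (fst A) (fst (snd A))"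

lemma row_source_single [simp]: "row_source D (cleft D a, [a]) = cell_source D a"
  by (simp add: row_source_def cell_source_def)

lemma comp_ok_iff_row_target:
  "comp_ok D f cs b \<longleftrightarrow> is_row D f cs \<and> b \<in> Cell D \<and> row_target D (f, cs) = cell_source D b"
  by (auto simp: comp_ok_def row_target_def cell_source_def)

lemma row_shape_source_length: "row_shape D p t \<Longrightarrow> length (concat (map (csrc D) (snd p))) = sum_list t"
  by (auto simp: row_shape_def length_concat o_def)

lemma length_concat_unary:
  "\<forall>e\<in>set es. length (csrc D e) = 1 \<Longrightarrow> length (concat (map (csrc D) es)) = length es"
  by (induction es) auto

lemma concat_unary_cells:
  "length ss = length ps \<Longrightarrow> \<forall>j<length ps. csrc D (ss ! j) = [ps ! j] \<Longrightarrow> concat (map (csrc D) ss) = ps"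
proof (induction ss arbitrary: ps)
  case (Cons s ss)
  then obtain p ps' where "ps = p # ps'"
    by (cases ps) auto
  with Cons show ?case
    by fastforce
qed simp

fun paste_row :: "('o, 't, 'l, 'c, 'm) vdc_scheme \<Rightarrow> 't \<Rightarrow> 'c list \<Rightarrow> 'c list \<Rightarrow> 'c list" where
  "paste_row D f es [] = []"
| "paste_row D f es (d # ds) = comp D f (take (length (csrc D d)) es) d
     # paste_row D (row_right D f (take (length (csrc D d)) es)) (drop (length (csrc D d)) es) ds"

lemma bnd_shift: "n \<le> length es \<Longrightarrow> bnd D f es (n + k) = bnd D (row_right D f (take n es)) (drop n es) k"
  by (auto simp: bnd_def row_right_def last_conv_nth min_def)

lemma off_Cons_0 [simp]: "off D (d # ds) 0 = 0"
  by (simp add: off_def)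

lemma off_Cons_Suc [simp]: "off D (d # ds) (Suc j) = length (csrc D d) + off D ds j"
  by (simp add: off_def)

lemma map_rowcomp_cells_eq_paste_row:
  "length (concat (map (csrc D) ds)) \<le> length es \<Longrightarrow>
   map (\<lambda>j. comp D (bnd D f es (off D ds j)) (take (length (csrc D (ds ! j))) (drop (off D ds j) es)) (ds ! j))
     [0..<length ds] = paste_row D f es ds"
proof (induction ds arbitrary: f es)
  case (Cons d ds)
  let ?n = "length (csrc D d)"
  have n: "?n \<le> length es" and rest: "length (concat (map (csrc D) ds)) \<le> length (drop ?n es)"
    using Cons.prems by simp_all
  have upt: "[0..<length (d # ds)] = 0 # map Suc [0..<length ds]"
    by (simp add: upt_conv_Cons map_Suc_upt del: upt_Suc)
  have "bnd D f es (off D (d # ds) (Suc j)) = bnd D (row_right D f (take ?n es)) (drop ?n es) (off D ds j)"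
    for j using bnd_shift[OF n] by simp
  moreover have "drop (off D (d # ds) (Suc j)) es = drop (off D ds j) (drop ?n es)" for j
    by (simp add: add.commute)
  moreover have "bnd D f es (off D (d # ds) 0) = f"
    by (simp add: bnd_def)
  ultimately show ?case
    unfolding upt list.map map_map o_def
    using Cons.IH[OF rest, of "row_right D f (take ?n es)", symmetric] n
    by (simp del: upt_Suc off_Cons_Suc)
qed simp

lemma rowcomp_paste_row:
  "length (concat (map (csrc D) ds)) \<le> length es \<Longrightarrow>
   rowcomp D (f, es) (g, ds) = (tcomp D g f, paste_row D f es ds)"
  by (simp add: rowcomp_def map_rowcomp_cells_eq_paste_row)

locale virtual_double_category =
  fixes D :: "('o, 't, 'l, 'c, 'm) vdc_scheme"
  assumes vdc: "vdc D"
begin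

lemma tight_Ob: "f \<in> Tight D \<Longrightarrow> tdom D f \<in> Ob D \<and> tcod D f \<in> Ob D"
  using vdc unfolding vdc_def by (elim conjE) blast

lemma tid_closed: "x \<in> Ob D \<Longrightarrow> tid D x \<in> Tight D \<and> tdom D (tid D x) = x \<and> tcod D (tid D x) = x"
  using vdc unfolding vdc_def by (elim conjE) blast

lemma tcomp_closed:
  "f \<in> Tight D \<Longrightarrow> g \<in> Tight D \<Longrightarrow> tdom D g = tcod D f \<Longrightarrow>
    tcomp D g f \<in> Tight D \<and> tdom D (tcomp D g f) = tdom D f \<and> tcod D (tcomp D g f) = tcod D g"
  using vdc unfolding vdc_def by (elim conjE) blast

lemma tcomp_tid: "f \<in> Tight D \<Longrightarrow> tcomp D f (tid D (tdom D f)) = f \<and> tcomp D (tid D (tcod D f)) f = f"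
  using vdc unfolding vdc_def by (elim conjE) blast

lemma loose_Ob: "p \<in> Loose D \<Longrightarrow> ldom D p \<in> Ob D \<and> lcod D p \<in> Ob D"
  using vdc unfolding vdc_def by (elim conjE) blast

lemma cell_boundary:
  "a \<in> Cell D \<Longrightarrow> cleft D a \<in> Tight D \<and> cright D a \<in> Tight D \<and> ctgt D a \<in> Loose D
    \<and> is_path D (tdom D (cleft D a)) (csrc D a) (tdom D (cright D a))
    \<and> tcod D (cleft D a) = ldom D (ctgt D a) \<and> tcod D (cright D a) = lcod D (ctgt D a)"
  using vdc unfolding vdc_def by (elim conjE) blast

lemma cid_cell:
  "p \<in> Loose D \<Longrightarrow> cid D p \<in> Cell D \<and> csrc D (cid D p) = [p] \<and> ctgt D (cid D p) = p
    \<and> cleft D (cid D p) = tid D (ldom D p) \<and> cright D (cid D p) = tid D (lcod D p)"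
  using vdc unfolding vdc_def by (elim conjE) blast

lemma comp_cell:
  "comp_ok D f cs b \<Longrightarrow>
    comp D f cs b \<in> Cell D \<and> csrc D (comp D f cs b) = concat (map (csrc D) cs)
    \<and> ctgt D (comp D f cs b) = ctgt D b
    \<and> cleft D (comp D f cs b) = tcomp D (cleft D b) f
    \<and> cright D (comp D f cs b) = tcomp D (cright D b) (row_right D f cs)"
  using vdc unfolding vdc_def by (elim conjE) blast

lemma comp_cid_source: "b \<in> Cell D \<Longrightarrow> comp D (tid D (tdom D (cleft D b))) (map (cid D) (csrc D b)) b = b"
  using vdc unfolding vdc_def by (elim conjE) blast

lemma comp_cid_target: "a \<in> Cell D \<Longrightarrow> comp D (cleft D a) [a] (cid D (ctgt D a)) = a"
  using vdc unfolding vdc_def by (elim conjE) blast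

lemma comp_assoc:
  "comp_ok D g ds b \<Longrightarrow> is_row D f es \<Longrightarrow> map (ctgt D) es = concat (map (csrc D) ds) \<Longrightarrow>
    tcod D f = tdom D g \<Longrightarrow> tcod D (row_right D f es) = tdom D (row_right D g ds) \<Longrightarrow>
    comp D f es (comp D g ds b) =
      comp D (fst (rowcomp D (f, es) (g, ds))) (snd (rowcomp D (f, es) (g, ds))) b"
  using vdc unfolding vdc_def by (elim conjE allE impE) auto

lemma is_path_Ob: "is_path D x ps y \<Longrightarrow> x \<in> Ob D \<and> y \<in> Ob D"
  by (induction ps arbitrary: x) (auto dest: loose_Ob)

lemma is_path_Loose: "is_path D x ps y \<Longrightarrow> set ps \<subseteq> Loose D"
  by (induction ps arbitrary: x) auto

lemma is_path_append: "is_path D x (ps @ qs) z \<longleftrightarrow> (\<exists>y. is_path D x ps y \<and> is_path D y qs z)"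
  by (induction ps arbitrary: x) (auto dest: is_path_Ob)

lemma is_row_Cons:
  "is_row D f (c # cs) \<longleftrightarrow> f \<in> Tight D \<and> c \<in> Cell D \<and> cleft D c = f \<and> is_row D (cright D c) cs"
  by (auto simp: is_row_successively successively_Cons dest: cell_boundary)

lemma is_row_append: "is_row D f (xs @ ys) \<longleftrightarrow> is_row D f xs \<and> is_row D (row_right D f xs) ys"
  by (induction xs arbitrary: f) (auto simp: is_row_Cons dest: is_row_Tight)

lemma row_right_Tight: "is_row D f cs \<Longrightarrow> row_right D f cs \<in> Tight D"
  by (induction cs arbitrary: f) (auto simp: is_row_Cons)

lemma row_source_path:
  "is_row D f cs \<Longrightarrow> is_path D (tdom D f) (concat (map (csrc D) cs)) (tdom D (row_right D f cs))"
  by (induction cs arbitrary: f) (auto simp: is_row_Cons is_path_append dest: tight_Ob cell_boundary)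

lemma row_right_tcod:
  "is_row D f es \<Longrightarrow> is_path D (tcod D f) (map (ctgt D) es) y \<Longrightarrow> tcod D (row_right D f es) = y"
  by (induction es arbitrary: f) (auto simp: is_row_Cons dest: cell_boundary)

lemma is_row_single: "g \<in> Cell D \<Longrightarrow> is_row D (cleft D g) [g]"
  using cell_boundary by (simp add: is_row_Cons)

lemma concat_csrc_cid: "set ps \<subseteq> Loose D \<Longrightarrow> concat (map (csrc D) (map (cid D) ps)) = ps"
  by (induction ps) (auto dest: cid_cell)

lemma id_row_is_row: "is_path D x ps y \<Longrightarrow> is_row D (tid D x) (map (cid D) ps)"
proof (induction ps arbitrary: x)
  case Nil
  then show ?case
    using tid_closed by auto
next
  case (Cons p ps)
  then have "p \<in> Loose D" "x = ldom D p" "is_path D (lcod D p) ps y"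
    by simp_all
  then show ?case
    using Cons.IH cid_cell loose_Ob tid_closed by (simp add: is_row_Cons)
qed

lemma row_right_id_row: "is_path D x ps y \<Longrightarrow> row_right D (tid D x) (map (cid D) ps) = tid D y"
  by (induction ps arbitrary: x) (auto dest: cid_cell)

lemma paste_row_cid: "is_row D f cs \<Longrightarrow> paste_row D f cs (map (cid D) (map (ctgt D) cs)) = cs"
proof (induction cs arbitrary: f)
  case (Cons c cs)
  then have c: "c \<in> Cell D" "cleft D c = f" "is_row D (cright D c) cs"
    by (auto simp: is_row_Cons)
  moreover have "csrc D (cid D (ctgt D c)) = [ctgt D c]"
    using cid_cell cell_boundary c(1) by blast
  ultimately show ?case
    using Cons.IH comp_cid_target[OF c(1), unfolded c(2)] by simp
qed simp

lemma rowcomp_id_row_right: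
  assumes "is_row D f cs" and "tcod D f = x"
  shows "rowcomp D (f, cs) (id_row D x (map (ctgt D) cs)) = (f, cs)"
proof -
  have "set (map (ctgt D) cs) \<subseteq> Loose D"
    using is_row_cells[OF assms(1)] cell_boundary by auto
  then have "length (concat (map (csrc D) (map (cid D) (map (ctgt D) cs)))) \<le> length cs"
    by (simp only: concat_csrc_cid length_map order_refl)
  then have "rowcomp D (f, cs) (id_row D x (map (ctgt D) cs)) = (tcomp D (tid D x) f, cs)"
    unfolding id_row_def by (simp only: rowcomp_paste_row paste_row_cid[OF assms(1)])
  then show ?thesis
    using tcomp_tid[OF is_row_Tight[OF assms(1)]] assms(2) by simp
qed

lemma paste_id_row: "is_row D g ds \<Longrightarrow> paste_row D (tid D (tdom D g)) (map (cid D) (concat (map (csrc D) ds))) ds = ds"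
proof (induction ds arbitrary: g)
  case (Cons d ds)
  then have d: "d \<in> Cell D" "cleft D d = g" "is_row D (cright D d) ds"
    by (auto simp: is_row_Cons)
  then have "is_path D (tdom D g) (csrc D d) (tdom D (cright D d))"
    using cell_boundary by blast
  then show ?case
    using Cons.IH[OF d(3)] row_right_id_row comp_cid_source[OF d(1)] d(2) by simp
qed simp

lemma rowcomp_id_row_left:
  assumes "is_row D g ds" and "x = tdom D g"
  shows "rowcomp D (id_row D x (concat (map (csrc D) ds))) (g, ds) = (g, ds)"
proof -
  have "rowcomp D (id_row D x (concat (map (csrc D) ds))) (g, ds) = (tcomp D g (tid D x), ds)"
    using assms by (simp add: id_row_def rowcomp_paste_row paste_id_row)
  then show ?thesis
    using tcomp_tid[OF is_row_Tight[OF assms(1)]] assms(2) by simp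
qed

lemma rowcomp_id_target: "is_row D (fst p) (snd p) \<Longrightarrow> rowcomp D p (id_row_on D (row_target D p)) = p"
  using rowcomp_id_row_right[of "fst p" "snd p"] by (simp add: id_row_on_def row_target_def)

lemma rowcomp_id_source: "is_row D (fst p) (snd p) \<Longrightarrow> rowcomp D (id_row_on D (row_source D p)) p = p"
  using rowcomp_id_row_left[of "fst p" "snd p"] by (simp add: id_row_on_def row_source_def)

lemma row_split_at_cell:
  assumes es: "is_row D f es" and d: "is_row D g (d # ds)"
    and tgt: "map (ctgt D) es = concat (map (csrc D) (d # ds))" and fg: "tcod D f = tdom D g"
  defines "n \<equiv> length (csrc D d)"
  shows "comp_ok D f (take n es) d \<and> is_row D (row_right D f (take n es)) (drop n es)
    \<and> map (ctgt D) (drop n es) = concat (map (csrc D) ds)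
    \<and> tcod D (row_right D f (take n es)) = tdom D (cright D d)"
proof -
  have tgt1: "map (ctgt D) (take n es) = csrc D d"
    using arg_cong[OF tgt, of "take n"] by (simp add: n_def take_map)
  have tgt2: "map (ctgt D) (drop n es) = concat (map (csrc D) ds)"
    using arg_cong[OF tgt, of "drop n"] by (simp add: n_def drop_map)
  have rows: "is_row D f (take n es)" "is_row D (row_right D f (take n es)) (drop n es)"
    using es is_row_append[of f "take n es" "drop n es"] by simp_all
  have cd: "d \<in> Cell D" "cleft D d = g"
    using d by (simp_all add: is_row_Cons)
  then have "is_path D (tcod D f) (csrc D d) (tdom D (cright D d))"
    using cell_boundary fg by metis
  then have "tcod D (row_right D f (take n es)) = tdom D (cright D d)"
    using row_right_tcod[OF rows(1)] tgt1 by simp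
  then show ?thesis
    using rows tgt1 tgt2 cd fg by (simp add: comp_ok_def)
qed

lemma paste_row_row:
  assumes "is_row D f es" "is_row D g ds" "map (ctgt D) es = concat (map (csrc D) ds)"
    "tcod D f = tdom D g"
  shows "is_row D (tcomp D g f) (paste_row D f es ds)
   \<and> map (ctgt D) (paste_row D f es ds) = map (ctgt D) ds
   \<and> concat (map (csrc D) (paste_row D f es ds)) = concat (map (csrc D) es)
   \<and> row_right D (tcomp D g f) (paste_row D f es ds) = tcomp D (row_right D g ds) (row_right D f es)"
  using assms
proof (induction ds arbitrary: f es g)
  case Nil
  then show ?case
    using tcomp_closed[OF is_row_Tight[OF Nil(1)] is_row_Tight[OF Nil(2)]] by simp
next
  case (Cons d ds)
  define n where "n = length (csrc D d)"
  note split = row_split_at_cell[OF Cons.prems, folded n_def]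
  note c = comp_cell[of f "take n es" d]
  have d: "cleft D d = g" "is_row D (cright D d) ds"
    using Cons.prems(2) by (simp_all add: is_row_Cons)
  have "tcomp D g f \<in> Tight D"
    using tcomp_closed[OF is_row_Tight[OF Cons.prems(1)] is_row_Tight[OF Cons.prems(2)]] Cons.prems(4)
    by simp
  moreover have "row_right D f es = row_right D (row_right D f (take n es)) (drop n es)"
    using row_right_append[of D f "take n es" "drop n es"] by simp
  moreover have "concat (map (csrc D) es)
      = concat (map (csrc D) (take n es)) @ concat (map (csrc D) (drop n es))"
    by (metis append_take_drop_id concat_append map_append)
  ultimately show ?case
    using Cons.IH[OF _ d(2)] split c d by (simp add: n_def is_row_Cons)
qed

lemma paste_unary_row_arities:
  assumes "is_row D f es" "is_row D g ds" "map (ctgt D) es = concat (map (csrc D) ds)"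
    "tcod D f = tdom D g" and unary: "\<forall>e\<in>set es. length (csrc D e) = 1"
  shows "map (\<lambda>c. length (csrc D c)) (paste_row D f es ds) = map (\<lambda>c. length (csrc D c)) ds"
  using assms
proof (induction ds arbitrary: f es g)
  case (Cons d ds)
  define n where "n = length (csrc D d)"
  note split = row_split_at_cell[OF Cons.prems(1-4), folded n_def]
  have "length (take n es) = n"
    using split by (metis comp_ok_def length_map n_def)
  moreover have "length (concat (map (csrc D) (take n es))) = length (take n es)"
    using Cons.prems(5) by (meson in_set_takeD length_concat_unary)
  ultimately have "length (csrc D (comp D f (take n es) d)) = n"
    using comp_cell split by simp
  moreover have "is_row D (cright D d) ds"
    using Cons.prems(2) by (simp add: is_row_Cons)
  then have "map (\<lambda>c. length (csrc D c)) (paste_row D (row_right D f (take n es)) (drop n es) ds)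
      = map (\<lambda>c. length (csrc D c)) ds"
    using Cons.IH split Cons.prems(5) by (meson in_set_dropD)
  ultimately show ?case
    by (simp add: n_def)
qed simp

lemma rowcomp_row:
  assumes R: "is_row D (fst R) (snd R)" and S: "is_row D (fst S) (snd S)"
    and RS: "row_target D R = row_source D S"
  shows "rowcomp D R S = (tcomp D (fst S) (fst R), paste_row D (fst R) (snd R) (snd S))"
    "is_row D (fst (rowcomp D R S)) (snd (rowcomp D R S))" "row_target D (rowcomp D R S) = row_target D S"
proof -
  have tgt: "map (ctgt D) (snd R) = concat (map (csrc D) (snd S))" and "tcod D (fst R) = tdom D (fst S)"
    and "tcod D (row_right D (fst R) (snd R)) = tdom D (row_right D (fst S) (snd S))"
    using RS by (simp_all add: row_target_def row_source_def)
  moreover have "length (concat (map (csrc D) (snd S))) \<le> length (snd R)"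
    using arg_cong[OF tgt, of length] by simp
  ultimately show eq: "rowcomp D R S = (tcomp D (fst S) (fst R), paste_row D (fst R) (snd R) (snd S))"
    and "is_row D (fst (rowcomp D R S)) (snd (rowcomp D R S))"
    using rowcomp_paste_row[of D "snd S" "snd R" "fst R" "fst S"] paste_row_row[OF R S]
    by simp_all
  have "tcod D (tcomp D (fst S) (fst R)) = tcod D (fst S)"
    and "tcod D (tcomp D (row_right D (fst S) (snd S)) (row_right D (fst R) (snd R)))
      = tcod D (row_right D (fst S) (snd S))"
    using tcomp_closed[OF is_row_Tight[OF R] is_row_Tight[OF S]]
      tcomp_closed[OF row_right_Tight[OF R] row_right_Tight[OF S]] \<open>tcod D (fst R) = tdom D (fst S)\<close>
      \<open>tcod D (row_right D (fst R) (snd R)) = tdom D (row_right D (fst S) (snd S))\<close>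
    by simp_all
  then show "row_target D (rowcomp D R S) = row_target D S"
    using eq paste_row_row[OF R S] \<open>tcod D (fst R) = tdom D (fst S)\<close> tgt
      \<open>tcod D (row_right D (fst R) (snd R)) = tdom D (row_right D (fst S) (snd S))\<close>
    by (simp add: row_target_def)
qed

lemma cell_source_comp: "comp_ok D f cs b \<Longrightarrow> cell_source D (comp D f cs b) = row_source D (f, cs)"
proof -
  assume ok: "comp_ok D f cs b"
  then have "f \<in> Tight D" "row_right D f cs \<in> Tight D" "cleft D b \<in> Tight D" "cright D b \<in> Tight D"
    using is_row_Tight row_right_Tight cell_boundary by (auto simp: comp_ok_def)
  then show ?thesis
    using comp_cell[OF ok] ok tcomp_closed by (simp add: comp_ok_def cell_source_def row_source_def)
qed

lemma row_between_id_row: "is_path D x ps y \<Longrightarrow> row_between D (x, ps, y) (x, ps, y) (id_row D x ps)"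
proof -
  assume p: "is_path D x ps y"
  have "csrc D (map (cid D) ps ! j) = [ps ! j] \<and> ctgt D (map (cid D) ps ! j) = ps ! j" if "j < length ps" for j
  proof -
    have "ps ! j \<in> Loose D"
      using that is_path_Loose[OF p] nth_mem by blast
    then show ?thesis
      using that cid_cell by simp
  qed
  then show ?thesis
    using id_row_is_row[OF p] row_right_id_row[OF p] is_path_Ob[OF p] tid_closed
    by (simp add: row_between_def id_row_def)
qed

lemma row_between_id_source:
  "is_row D (fst p) (snd p) \<Longrightarrow> row_between D (row_source D p) (row_source D p) (id_row_on D (row_source D p))"
  using row_between_id_row[OF row_source_path] by (simp add: row_source_def id_row_on_def)

lemma row_between_id_cell_source:
  "g \<in> Cell D \<Longrightarrow> row_between D (cell_source D g) (cell_source D g) (id_row_on D (cell_source D g))"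
  using row_between_id_source[of "(cleft D g, [g])"] is_row_single by simp

lemma row_between_unary_row:
  assumes "row_between D A B \<sigma>"
  shows "is_row D (fst \<sigma>) (snd \<sigma>)" "\<forall>c\<in>set (snd \<sigma>). length (csrc D c) = 1"
    "row_source D \<sigma> = A" "row_target D \<sigma> = B"
proof -
  obtain x ps y x' qs y' where AB: "A = (x, ps, y)" "B = (x', qs, y')"
    by (cases A; cases B) auto
  then have \<sigma>: "is_row D (fst \<sigma>) (snd \<sigma>)" "length (snd \<sigma>) = length ps" "length qs = length ps"
    "\<forall>j<length ps. csrc D (snd \<sigma> ! j) = [ps ! j] \<and> ctgt D (snd \<sigma> ! j) = qs ! j"
    "tdom D (fst \<sigma>) = x" "tcod D (fst \<sigma>) = x'"
    "tdom D (row_right D (fst \<sigma>) (snd \<sigma>)) = y" "tcod D (row_right D (fst \<sigma>) (snd \<sigma>)) = y'"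
    using assms by (simp_all add: row_between_def)
  show "is_row D (fst \<sigma>) (snd \<sigma>)"
    by (fact \<sigma>(1))
  show "\<forall>c\<in>set (snd \<sigma>). length (csrc D c) = 1"
    using \<sigma>(2,4) by (auto simp: in_set_conv_nth)
  have "map (ctgt D) (snd \<sigma>) = qs"
    using \<sigma>(2-4) by (intro nth_equalityI) auto
  then show "row_target D \<sigma> = B"
    using AB \<sigma> by (simp add: row_target_def)
  show "row_source D \<sigma> = A"
    using AB \<sigma> concat_unary_cells[of "snd \<sigma>" ps D] by (simp add: row_source_def)
qed

end

section \<open>Stacks of layers and decompositions\<close>

text \<open>Layers are listed from the root upwards, so each row has its successor on top of it.\<close>

definition is_stack :: "('o, 't, 'l, 'c, 'm) vdc_scheme \<Rightarrow> nat list list \<Rightarrow> ('t \<times> 'c list) list \<Rightarrow> bool" where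
  "is_stack D T P \<longleftrightarrow> valid_tree T \<and> list_all2 (row_shape D) P T
     \<and> successively (\<lambda>p q. row_target D q = row_source D p) P"

definition collapse :: "('o, 't, 'l, 'c, 'm) vdc_scheme \<Rightarrow> ('t \<times> 'c list) list \<Rightarrow> ('t \<times> 'c list) list" where
  "collapse D Y = [(cleft D (iter_comp D (butlast Y)), [iter_comp D (butlast Y)]), last Y]"

lemma iface_eq_row_source: "iface D P k = row_source D (P ! (k - 1))"
  by (simp add: iface_def row_source_def)

lemma iface_append: "1 \<le> k \<Longrightarrow> k \<le> length P \<Longrightarrow> iface D (P @ Q) k = iface D P k"
  by (simp add: iface_def nth_append less_eq_Suc_le)

lemma valid_tree_successively:
  "valid_tree T \<longleftrightarrow> T \<noteq> [] \<and> length (hd T) = 1 \<and> successively (\<lambda>s t. length t = sum_list s) T"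
  by (auto simp: valid_tree_def successively_conv_nth hd_conv_nth)

lemma valid_tree_snoc:
  "T \<noteq> [] \<Longrightarrow> valid_tree (T @ [t]) \<longleftrightarrow> valid_tree T \<and> length t = sum_list (last T)"
  by (auto simp: valid_tree_successively successively_append_iff)

lemma valid_tree_height2: "valid_tree [[k], t] \<longleftrightarrow> length t = k"
  by (simp add: valid_tree_successively)

lemma is_decomp_iff_stack: "is_decomp D a T P \<longleftrightarrow> a \<in> Cell D \<and> is_stack D T P \<and> iter_comp D P = a"
  by (auto simp: is_decomp_def is_stack_def list_all2_conv_all_nth successively_conv_nth row_shape_def
      row_source_def row_target_def)

lemma is_stack_snoc:
  assumes "T \<noteq> []" and "length P = length T"
  shows "is_stack D (T @ [t]) (P @ [r]) \<longleftrightarrow> is_stack D T P \<and> length t = sum_list (last T)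
    \<and> row_shape D r t \<and> row_target D r = row_source D (last P)"
  using assms by (auto simp: is_stack_def valid_tree_snoc list_all2_append successively_append_iff)

lemma is_stack_last_row: "is_stack D T P \<Longrightarrow> row_shape D (last P) (last T)"
proof -
  assume "is_stack D T P"
  then have "T \<noteq> []" "length P = length T" "\<forall>i<length T. row_shape D (P ! i) (T ! i)"
    by (auto simp: is_stack_def valid_tree_def list_all2_conv_all_nth)
  then show ?thesis
    by (metis diff_less last_conv_nth length_greater_0_conv less_numeral_extra(1))
qed

lemma iter_comp_snoc: "P \<noteq> [] \<Longrightarrow> iter_comp D (P @ [r]) = comp D (fst r) (snd r) (iter_comp D P)"
  by (cases P) (auto simp: iter_comp_def)

lemma iter_comp_single: "iter_comp D [p] = hd (snd p)"
  by (simp add: iter_comp_def)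

context virtual_double_category
begin

lemma stack_composite:
  "is_stack D T P \<Longrightarrow> iter_comp D P \<in> Cell D \<and> ctgt D (iter_comp D P) = ctgt D (hd (snd (hd P)))
    \<and> cell_source D (iter_comp D P) = row_source D (last P)"
proof (induction P arbitrary: T rule: rev_induct)
  case Nil
  then show ?case
    by (auto simp: is_stack_def valid_tree_def)
next
  case (snoc r P)
  then have "T \<noteq> []" and len: "length (P @ [r]) = length T"
    unfolding is_stack_def valid_tree_def using list_all2_lengthD by blast+
  then obtain T' t where T: "T = T' @ [t]"
    by (metis rev_exhaust)
  show ?case
  proof (cases "P = []")
    case True
    then have "row_shape D r t" and "length t = 1"
      using snoc.prems len by (auto simp: T is_stack_def valid_tree_def)
    then obtain c where "snd r = [c]" "c \<in> Cell D" "cleft D c = fst r"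
      by (auto simp: row_shape_def length_Suc_conv is_row_Cons)
    then show ?thesis
      using True by (simp add: iter_comp_single row_source_def cell_source_def)
  next
    case False
    define g where "g = iter_comp D P"
    have "length P = length T'" "T' \<noteq> []"
      using len False by (auto simp: T)
    then have stack: "is_stack D T' P" and r: "row_shape D r t" "row_target D r = row_source D (last P)"
      using snoc.prems is_stack_snoc[of T' P D t r] by (simp_all add: T)
    note IH = snoc.IH[OF stack, folded g_def]
    then have ok: "comp_ok D (fst r) (snd r) g"
      using r by (simp add: comp_ok_iff_row_target row_shape_def)
    then show ?thesis
      using comp_cell[OF ok] cell_source_comp[OF ok] IH False
      by (simp add: iter_comp_snoc g_def)
  qed
qed

lemma is_stack_row: "is_stack D T P \<Longrightarrow> i < length T \<Longrightarrow> is_row D (fst (P ! i)) (snd (P ! i))"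
  by (simp add: is_stack_def list_all2_conv_all_nth row_shape_def)

lemma is_stack_target_source:
  "is_stack D T P \<Longrightarrow> Suc i < length T \<Longrightarrow> row_target D (P ! Suc i) = row_source D (P ! i)"
  by (auto simp: is_stack_def list_all2_conv_all_nth successively_conv_nth)

lemma row_shape_single: "row_shape D (cleft D g, [g]) [k] \<longleftrightarrow> g \<in> Cell D \<and> length (csrc D g) = k"
  using cell_boundary by (auto simp: row_shape_def is_row_Cons)

lemma decomp_height2:
  "is_decomp D a [[k], t] [(cleft D g, [g]), r] \<longleftrightarrow>
     g \<in> Cell D \<and> length (csrc D g) = k \<and> row_shape D r t \<and> comp_ok D (fst r) (snd r) g
     \<and> comp D (fst r) (snd r) g = a"
proof -
  have "iter_comp D [(cleft D g, [g]), r] = comp D (fst r) (snd r) g"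
    using iter_comp_snoc[of "[(cleft D g, [g])]" D r] by (simp add: iter_comp_single)
  then have "is_decomp D a [[k], t] [(cleft D g, [g]), r] \<longleftrightarrow> a \<in> Cell D \<and> length t = k
      \<and> g \<in> Cell D \<and> length (csrc D g) = k \<and> row_shape D r t \<and> row_target D r = cell_source D g
      \<and> comp D (fst r) (snd r) g = a"
    by (auto simp: is_decomp_iff_stack is_stack_def valid_tree_height2 row_shape_single)
  moreover have "length t = length (csrc D g)" if "row_shape D r t" "row_target D r = cell_source D g"
    using that by (auto simp: row_shape_def row_target_def cell_source_def dest: arg_cong[of _ _ length])
  ultimately show ?thesis
    using comp_cell by (auto simp: comp_ok_iff_row_target row_shape_def)
qed

lemma height2_decomp_shape:
  assumes "is_decomp D a [[k], t] X"
  obtains g r where "X = [(cleft D g, [g]), r]"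
proof -
  obtain p r where X: "X = [p, r]" and "row_shape D p [k]"
    using assms by (auto simp: is_decomp_iff_stack is_stack_def list_all2_Cons2)
  then obtain g where "snd p = [g]" "cleft D g = fst p"
    by (auto simp: row_shape_def length_Suc_conv is_row_Cons)
  then show ?thesis
    using that X by (metis prod.collapse)
qed

lemma decomp_snoc:
  assumes "T \<noteq> []" and "length P = length T"
  shows "is_decomp D a (T @ [t]) (P @ [r]) \<longleftrightarrow>
    is_decomp D (iter_comp D P) T P \<and> is_decomp D a [[length t], t] [(cleft D (iter_comp D P), [iter_comp D P]), r]"
proof (cases "is_stack D T P")
  case True
  define g where "g = iter_comp D P"
  have g: "g \<in> Cell D" "cell_source D g = row_source D (last P)"
    using stack_composite[OF True] by (simp_all add: g_def)
  then have "length (csrc D g) = sum_list (last T)"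
    using row_shape_source_length[OF is_stack_last_row[OF True]]
    by (simp add: cell_source_def row_source_def)
  moreover have "P \<noteq> []"
    using assms by auto
  then have "is_decomp D a (T @ [t]) (P @ [r]) \<longleftrightarrow> a \<in> Cell D \<and> length t = sum_list (last T)
      \<and> row_shape D r t \<and> row_target D r = cell_source D g \<and> comp D (fst r) (snd r) g = a"
    using True g(2) by (auto simp: is_decomp_iff_stack is_stack_snoc[OF assms] iter_comp_snoc g_def)
  moreover have "is_decomp D g T P"
    using True g(1) by (simp add: is_decomp_iff_stack g_def)
  ultimately show ?thesis
    using g(1) comp_cell
    by (auto simp: decomp_height2 comp_ok_iff_row_target row_shape_def simp flip: g_def)
next
  case False
  then show ?thesis
    using assms by (simp add: is_decomp_iff_stack is_stack_snoc)
qed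

lemma decomp_snoc_collapse:
  assumes "T \<noteq> []"
  shows "is_decomp D a (T @ [t]) Y \<longleftrightarrow> length Y = Suc (length T)
    \<and> is_decomp D (iter_comp D (butlast Y)) T (butlast Y) \<and> is_decomp D a [[length t], t] (collapse D Y)"
proof (cases "length Y = Suc (length T)")
  case True
  then have "Y = butlast Y @ [last Y]" "length (butlast Y) = length T"
    by (metis append_butlast_last_id length_greater_0_conv zero_less_Suc, simp)
  then show ?thesis
    using decomp_snoc[OF assms, of "butlast Y" a t "last Y"] True by (simp add: collapse_def)
next
  case False
  then show ?thesis
    by (auto simp: is_decomp_def)
qed

lemma iface_last: "is_decomp D g T P \<Longrightarrow> iface D P (length T) = cell_source D g"
proof -
  assume d: "is_decomp D g T P"
  then have "P \<noteq> []" "length P = length T"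
    by (auto simp: is_decomp_def valid_tree_def)
  then have "P ! (length T - 1) = last P"
    by (simp add: last_conv_nth)
  then show ?thesis
    using d stack_composite[of T P] by (auto simp: is_decomp_iff_stack iface_eq_row_source)
qed

lemma decomp_root_target:
  assumes "is_decomp D g T Q"
  shows "row_target D (Q ! 0) = (ldom D (ctgt D g), [ctgt D g], lcod D (ctgt D g))"
proof -
  have stack: "is_stack D T Q" and g: "iter_comp D Q = g"
    using assms by (simp_all add: is_decomp_iff_stack)
  then have "row_shape D (Q ! 0) (T ! 0)" "length (T ! 0) = 1" "Q \<noteq> []"
    by (auto simp: is_stack_def valid_tree_def list_all2_conv_all_nth)
  then obtain c where c: "snd (Q ! 0) = [c]" "c \<in> Cell D" "cleft D c = fst (Q ! 0)"
    by (auto simp: row_shape_def length_Suc_conv is_row_Cons)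
  moreover have "ctgt D g = ctgt D c"
    using stack_composite[OF stack] g c \<open>Q \<noteq> []\<close> by (simp add: hd_conv_nth)
  ultimately show ?thesis
    using cell_boundary[OF c(2)] by (simp add: row_target_def)
qed

end

section \<open>Morphisms of decompositions\<close>

lemma decomp_equiv_eq_equivclp: "decomp_equiv D a T = equivclp (has_decomp_morph D a T)"
  by (simp add: decomp_equiv_def equivclp_def symclp_def [abs_def])

context virtual_double_category
begin

lemma stack_id_square:
  assumes "is_stack D T Q" and "Suc i < length T"
  shows "rowcomp D (Q ! i) (id_row_on D (row_target D (Q ! i)))
    = rowcomp D (id_row_on D (row_target D (Q ! Suc i))) (Q ! i)"
  using rowcomp_id_target rowcomp_id_source is_stack_row[OF assms(1)] is_stack_target_source[OF assms]
    assms(2) by simp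

lemma stack_id_between:
  assumes "is_stack D T Q" and "1 \<le> k" "k < length T"
  shows "row_between D (iface D Q k) (iface D Q k) (id_row_on D (row_target D (Q ! k)))"
proof -
  have "row_target D (Q ! k) = row_source D (Q ! (k - 1))"
    using is_stack_target_source[OF assms(1), of "k - 1"] assms(2,3) by simp
  then show ?thesis
    using row_between_id_source is_stack_row[OF assms(1), of "k - 1"] assms(3)
    by (simp add: iface_eq_row_source)
qed

lemma decomp_morph_snocI:
  assumes PQ: "is_decomp D a (T @ [t]) (P @ [r1])" "is_decomp D a (T @ [t]) (Q @ [r2])"
    and len: "length \<sigma> = Suc (length T)"
    and bottom: "\<sigma> ! 0 = id_row D (ldom D (ctgt D a)) [ctgt D a]"
    and between: "\<And>k. 1 \<le> k \<Longrightarrow> k \<le> length T \<Longrightarrow> row_between D (iface D P k) (iface D Q k) (\<sigma> ! k)"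
    and squares: "\<And>i. i < length T \<Longrightarrow> rowcomp D (P ! i) (\<sigma> ! i) = rowcomp D (\<sigma> ! Suc i) (Q ! i)"
    and top: "rowcomp D r1 (\<sigma> ! length T) = rowcomp D \<tau> r2" "\<tau> = id_row D (tdom D (cleft D a)) (csrc D a)"
  shows "decomp_morph D a (T @ [t]) (P @ [r1]) (Q @ [r2]) (\<sigma> @ [\<tau>])"
  unfolding decomp_morph_def
proof (intro conjI allI impI)
  have lenPQ: "length P = length T" "length Q = length T"
    using PQ by (simp_all add: is_decomp_def)
  show "is_decomp D a (T @ [t]) (P @ [r1])" "is_decomp D a (T @ [t]) (Q @ [r2])"
    by (fact PQ)+
  show "length (\<sigma> @ [\<tau>]) = length (T @ [t]) + 1" "(\<sigma> @ [\<tau>]) ! 0 = id_row D (ldom D (ctgt D a)) [ctgt D a]"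
    "(\<sigma> @ [\<tau>]) ! length (T @ [t]) = id_row D (tdom D (cleft D a)) (csrc D a)"
    using len bottom top(2) by (simp_all add: nth_append)
  show "row_between D (iface D (P @ [r1]) k) (iface D (Q @ [r2]) k) ((\<sigma> @ [\<tau>]) ! k)"
    if "1 \<le> k \<and> k < length (T @ [t])" for k
    using that between[of k] len lenPQ by (simp add: nth_append iface_append)
  show "rowcomp D ((P @ [r1]) ! i) ((\<sigma> @ [\<tau>]) ! i) = rowcomp D ((\<sigma> @ [\<tau>]) ! Suc i) ((Q @ [r2]) ! i)"
    if "i < length (T @ [t])" for i
  proof (cases "i < length T")
    case True
    then show ?thesis
      using squares len lenPQ by (simp add: nth_append)
  next
    case False
    then have "i = length T"
      using that by simp
    then show ?thesis
      using top(1) len lenPQ by (simp add: nth_append)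
  qed
qed

lemma lift_morph:
  assumes lower: "decomp_morph D g T Y1 Y2 \<sigma>" and "T \<noteq> []"
    and top: "is_decomp D a [[length t], t] [(cleft D g, [g]), r]"
  shows "decomp_morph D a (T @ [t]) (Y1 @ [r]) (Y2 @ [r]) (\<sigma> @ [id_row_on D (cell_source D a)])"
proof (rule decomp_morph_snocI)
  have Y: "is_decomp D g T Y1" "is_decomp D g T Y2"
    and \<sigma>: "\<sigma> ! length T = id_row_on D (cell_source D g)"
    using lower by (auto simp: decomp_morph_def id_row_on_def cell_source_def)
  have g: "g \<in> Cell D" and ok: "comp_ok D (fst r) (snd r) g"
    using top by (simp_all add: decomp_height2)
  then have r: "is_row D (fst r) (snd r)" "row_target D r = cell_source D g"
    and a: "ctgt D a = ctgt D g" "cell_source D a = row_source D r"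
    using top comp_cell[OF ok] cell_source_comp[OF ok] by (auto simp: comp_ok_iff_row_target decomp_height2)
  have "iter_comp D Y1 = g" "iter_comp D Y2 = g" "length Y1 = length T" "length Y2 = length T"
    using Y by (auto simp: is_decomp_def)
  then show "is_decomp D a (T @ [t]) (Y1 @ [r])" "is_decomp D a (T @ [t]) (Y2 @ [r])"
    using Y top decomp_snoc[OF \<open>T \<noteq> []\<close>] by simp_all
  show "length \<sigma> = Suc (length T)" "\<sigma> ! 0 = id_row D (ldom D (ctgt D a)) [ctgt D a]"
    "\<And>i. i < length T \<Longrightarrow> rowcomp D (Y1 ! i) (\<sigma> ! i) = rowcomp D (\<sigma> ! Suc i) (Y2 ! i)"
    using lower a(1) by (simp_all add: decomp_morph_def)
  show "row_between D (iface D Y1 k) (iface D Y2 k) (\<sigma> ! k)" if "1 \<le> k" "k \<le> length T" for k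
  proof (cases "k < length T")
    case True
    then show ?thesis
      using that lower by (simp add: decomp_morph_def)
  next
    case False
    then show ?thesis
      using that Y \<sigma> iface_last row_between_id_cell_source[OF g] by simp
  qed
  show "rowcomp D r (\<sigma> ! length T) = rowcomp D (id_row_on D (cell_source D a)) r"
    using \<sigma> a(2) rowcomp_id_target[OF r(1)] rowcomp_id_source[OF r(1)] by (simp add: r(2))
  show "id_row_on D (cell_source D a) = id_row D (tdom D (cleft D a)) (csrc D a)"
    by (simp add: id_row_on_def cell_source_def)
qed

lemma lift_equiv:
  assumes "decomp_equiv D g T Y1 Y2" and "T \<noteq> []"
    and "is_decomp D a [[length t], t] [(cleft D g, [g]), r]"
  shows "decomp_equiv D a (T @ [t]) (Y1 @ [r]) (Y2 @ [r])"
  using assms(1) unfolding decomp_equiv_eq_equivclp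
proof (induction rule: equivclp_induct)
  case (step Y Z)
  then have "has_decomp_morph D a (T @ [t]) (Y @ [r]) (Z @ [r]) \<or> has_decomp_morph D a (T @ [t]) (Z @ [r]) (Y @ [r])"
    using lift_morph[OF _ assms(2,3)] unfolding has_decomp_morph_def by blast
  then show ?case
    by (rule equivclp_into_equivclp[OF step.IH])
qed simp

lemma height2_morph_components:
  assumes m: "decomp_morph D a [[k], t] [(cleft D g1, [g1]), r1] [(cleft D g2, [g2]), r2] \<sigma>"
  shows "row_between D (cell_source D g1) (cell_source D g2) (\<sigma> ! 1)"
    and "g1 = comp D (fst (\<sigma> ! 1)) (snd (\<sigma> ! 1)) g2"
    and "rowcomp D r1 (\<sigma> ! 1) = rowcomp D (\<sigma> ! 2) r2"
    and "\<sigma> ! 2 = id_row D (tdom D (cleft D a)) (csrc D a)"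
proof -
  have d1: "is_decomp D a [[k], t] [(cleft D g1, [g1]), r1]"
    and \<sigma>0: "\<sigma> ! 0 = id_row D (ldom D (ctgt D a)) [ctgt D a]"
    and \<sigma>2: "\<sigma> ! 2 = id_row D (tdom D (cleft D a)) (csrc D a)"
    and between_all: "\<forall>k. 1 \<le> k \<and> k < 2 \<longrightarrow> row_between D (iface D [(cleft D g1, [g1]), r1] k)
        (iface D [(cleft D g2, [g2]), r2] k) (\<sigma> ! k)"
    and squares: "\<forall>i < 2. rowcomp D ([(cleft D g1, [g1]), r1] ! i) (\<sigma> ! i)
        = rowcomp D (\<sigma> ! Suc i) ([(cleft D g2, [g2]), r2] ! i)"
    using m unfolding decomp_morph_def by (simp_all add: numeral_2_eq_2)
  show between: "row_between D (cell_source D g1) (cell_source D g2) (\<sigma> ! 1)"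
    using between_all[rule_format, of 1] by (simp add: iface_eq_row_source)
  have bottom: "rowcomp D (cleft D g1, [g1]) (\<sigma> ! 0) = rowcomp D (\<sigma> ! 1) (cleft D g2, [g2])"
    using squares[rule_format, of 0] by simp
  show "rowcomp D r1 (\<sigma> ! 1) = rowcomp D (\<sigma> ! 2) r2"
    using squares[rule_format, of 1] by (simp add: numeral_2_eq_2)
  show "\<sigma> ! 2 = id_row D (tdom D (cleft D a)) (csrc D a)"
    by (fact \<sigma>2)
  have g2: "g2 \<in> Cell D"
    using m by (simp add: decomp_morph_def decomp_height2)
  have g1: "g1 \<in> Cell D" "ctgt D a = ctgt D g1"
    using d1 comp_cell by (auto simp: decomp_height2)
  then have "\<sigma> ! 0 = id_row_on D (row_target D (cleft D g1, [g1]))"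
    using \<sigma>0 cell_boundary by (simp add: id_row_on_def row_target_def)
  then have "rowcomp D (cleft D g1, [g1]) (\<sigma> ! 0) = (cleft D g1, [g1])"
    using rowcomp_id_target is_row_single[OF g1(1)] by simp
  moreover note \<sigma>1 = row_between_unary_row[OF between]
  have "map (ctgt D) (snd (\<sigma> ! 1)) = csrc D g2"
    using \<sigma>1(4) by (simp add: row_target_def cell_source_def)
  then have "length (snd (\<sigma> ! 1)) = length (csrc D g2)"
    by (metis length_map)
  then have "rowcomp D (\<sigma> ! 1) (cleft D g2, [g2])
      = (tcomp D (cleft D g2) (fst (\<sigma> ! 1)), [comp D (fst (\<sigma> ! 1)) (snd (\<sigma> ! 1)) g2])"
    using rowcomp_row(1)[OF \<sigma>1(1) _ , of "(cleft D g2, [g2])"] \<sigma>1(4) is_row_single[OF g2]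
    by (simp add: \<open>length (snd (\<sigma> ! 1)) = length (csrc D g2)\<close>[symmetric])
  ultimately show "g1 = comp D (fst (\<sigma> ! 1)) (snd (\<sigma> ! 1)) g2"
    using bottom by simp
qed

end

section \<open>Pasting a row of unary multicells onto the top layer\<close>

definition paste_top :: "('o, 't, 'l, 'c, 'm) vdc_scheme \<Rightarrow> 't \<times> 'c list \<Rightarrow> ('t \<times> 'c list) list \<Rightarrow> ('t \<times> 'c list) list" where
  "paste_top D s Q = butlast Q @ [rowcomp D s (last Q)]"

definition paste_components :: "('o, 't, 'l, 'c, 'm) vdc_scheme \<Rightarrow> ('t \<times> 'c list) list \<Rightarrow> 't \<times> 'c list \<Rightarrow> ('t \<times> 'c list) list" where
  "paste_components D Q s = map (\<lambda>i. id_row_on D (row_target D (Q ! i))) [0..<length Q] @ [s]"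

context virtual_double_category
begin

lemma decomp_height2_paste:
  assumes q: "is_decomp D g [[k], t] [(cleft D \<delta>, [\<delta>]), q]"
    and s: "is_row D (fst s) (snd s)" "\<forall>c\<in>set (snd s). length (csrc D c) = 1"
      "row_target D s = cell_source D g"
  shows "is_decomp D (comp D (fst s) (snd s) g) [[k], t] [(cleft D \<delta>, [\<delta>]), rowcomp D s q]"
proof -
  have \<delta>: "\<delta> \<in> Cell D" "length (csrc D \<delta>) = k" and q': "row_shape D q t"
    and ok: "comp_ok D (fst q) (snd q) \<delta>" and g: "comp D (fst q) (snd q) \<delta> = g"
    using q by (simp_all add: decomp_height2)
  then have qr: "is_row D (fst q) (snd q)" "row_target D q = cell_source D \<delta>"
    by (simp_all add: comp_ok_iff_row_target)
  have sq: "row_target D s = row_source D q"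
    using s(3) cell_source_comp[OF ok] g by simp
  note sq_row = rowcomp_row[OF s(1) qr(1) sq]
  have "map (\<lambda>c. length (csrc D c)) (snd (rowcomp D s q)) = t"
    using paste_unary_row_arities[OF s(1) qr(1) _ _ s(2)] q' sq sq_row(1)
    by (simp add: row_shape_def row_source_def row_target_def)
  then have "row_shape D (rowcomp D s q) t"
    using sq_row(2) by (simp add: row_shape_def)
  moreover have "comp_ok D (fst (rowcomp D s q)) (snd (rowcomp D s q)) \<delta>"
    using sq_row(2,3) qr(2) \<delta>(1) by (simp add: comp_ok_iff_row_target)
  moreover have "comp D (fst s) (snd s) g = comp D (fst (rowcomp D s q)) (snd (rowcomp D s q)) \<delta>"
    using comp_assoc[OF ok s(1)] sq g by (simp add: row_target_def row_source_def)
  ultimately show ?thesis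
    using \<delta> by (simp add: decomp_height2)
qed

lemma paste_top_decomp:
  assumes Q: "is_decomp D g T Q" and h: "2 \<le> length T"
    and s: "is_row D (fst s) (snd s)" "\<forall>c\<in>set (snd s). length (csrc D c) = 1"
      "row_target D s = cell_source D g"
  shows "is_decomp D (comp D (fst s) (snd s) g) T (paste_top D s Q)"
proof -
  obtain T' t where T: "T = T' @ [t]"
    using h by (cases T rule: rev_cases) auto
  then have "T' \<noteq> []"
    using h by auto
  moreover have "length Q = Suc (length T')"
    using Q T by (simp add: is_decomp_def)
  ultimately show ?thesis
    using Q decomp_height2_paste[OF _ s] by (simp add: T decomp_snoc_collapse paste_top_def collapse_def)
qed

lemma paste_top_squares:
  assumes Q: "is_decomp D g T Q" and h: "2 \<le> length T"
    and s: "is_row D (fst s) (snd s)" "row_target D s = cell_source D g" and i: "i < length T"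
  shows "rowcomp D (paste_top D s Q ! i) (paste_components D Q s ! i)
    = rowcomp D (paste_components D Q s ! Suc i) (Q ! i)"
proof -
  have stack: "is_stack D T Q"
    using Q by (simp add: is_decomp_iff_stack)
  have len: "length Q = length T"
    using Q by (simp add: is_decomp_def)
  have "Q \<noteq> []"
    using len h by (cases Q) auto
  then have Qlast: "last Q = Q ! (length T - 1)"
    using len by (simp add: last_conv_nth)
  show ?thesis
  proof (cases "Suc i < length T")
    case True
    moreover have "i < length T - 1"
      using True by linarith
    ultimately show ?thesis
      using stack_id_square[OF stack True] len
      by (simp add: paste_top_def paste_components_def nth_append nth_butlast)
  next
    case False
    then have i: "i = length T - 1"
      using assms by simp
    have "row_target D s = row_source D (Q ! i)"
      using s(2) stack_composite[OF stack] Q Qlast i by (simp add: is_decomp_iff_stack)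
    then have "is_row D (fst (rowcomp D s (Q ! i))) (snd (rowcomp D s (Q ! i)))"
      "row_target D (rowcomp D s (Q ! i)) = row_target D (Q ! i)"
      using rowcomp_row(2,3)[OF s(1) is_stack_row[OF stack assms(5)]] by blast+
    moreover have "T \<noteq> []"
      using h by auto
    ultimately show ?thesis
      using rowcomp_id_target[of "rowcomp D s (Q ! i)"] i Qlast len \<open>Q \<noteq> []\<close>
      by (simp add: paste_top_def paste_components_def nth_append)
  qed
qed

lemma paste_top_between:
  assumes Q: "is_decomp D g T Q" and P: "is_decomp D g' T (paste_top D s Q)"
    and s: "row_between D (cell_source D g') (cell_source D g) s" and k: "1 \<le> k" "k \<le> length T"
  shows "row_between D (iface D (paste_top D s Q) k) (iface D Q k) (paste_components D Q s ! k)"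
proof (cases "k < length T")
  case True
  have stack: "is_stack D T Q"
    using Q by (simp add: is_decomp_iff_stack)
  have len: "length Q = length T"
    using Q by (simp add: is_decomp_def)
  moreover have "k - 1 < length T - 1"
    using True k by linarith
  ultimately have "iface D (paste_top D s Q) k = iface D Q k"
    by (simp add: iface_eq_row_source paste_top_def nth_append nth_butlast)
  then show ?thesis
    using True k stack_id_between[OF stack] len by (simp add: paste_components_def nth_append)
next
  case False
  then show ?thesis
    using Q P k s iface_last[OF P] iface_last[OF Q]
    by (simp add: paste_components_def nth_append is_decomp_def)
qed

lemma paste_top_morph:
  assumes m: "decomp_morph D a [[length t], t] [(cleft D g1, [g1]), r1] [(cleft D g2, [g2]), r2] \<sigma>"
    and Q: "is_decomp D g2 T Q" and h: "2 \<le> length T"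
  shows "is_decomp D g1 T (paste_top D (\<sigma> ! 1) Q)
    \<and> has_decomp_morph D a (T @ [t]) (paste_top D (\<sigma> ! 1) Q @ [r1]) (Q @ [r2])"
proof -
  note \<sigma>1 = height2_morph_components[OF m]
  note s = row_between_unary_row[OF \<sigma>1(1)]
  have P: "is_decomp D g1 T (paste_top D (\<sigma> ! 1) Q)"
    using paste_top_decomp[OF Q h s(1,2,4)] \<sigma>1(2) by simp
  have "decomp_morph D a (T @ [t]) (paste_top D (\<sigma> ! 1) Q @ [r1]) (Q @ [r2])
      (paste_components D Q (\<sigma> ! 1) @ [\<sigma> ! 2])"
  proof (rule decomp_morph_snocI)
    have d: "is_decomp D a [[length t], t] [(cleft D g1, [g1]), r1]"
      "is_decomp D a [[length t], t] [(cleft D g2, [g2]), r2]"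
      using m by (simp_all add: decomp_morph_def)
    have "T \<noteq> []" "iter_comp D (paste_top D (\<sigma> ! 1) Q) = g1" "iter_comp D Q = g2"
      "length (paste_top D (\<sigma> ! 1) Q) = length T" "length Q = length T"
      using h P Q by (auto simp: is_decomp_def)
    then show "is_decomp D a (T @ [t]) (paste_top D (\<sigma> ! 1) Q @ [r1])" "is_decomp D a (T @ [t]) (Q @ [r2])"
      using decomp_snoc P Q d by simp_all
    then show "length (paste_components D Q (\<sigma> ! 1)) = Suc (length T)"
      by (simp add: paste_components_def is_decomp_def)
    have "ctgt D a = ctgt D g2"
      using d(2) comp_cell by (auto simp: decomp_height2)
    then show "paste_components D Q (\<sigma> ! 1) ! 0 = id_row D (ldom D (ctgt D a)) [ctgt D a]"
      using decomp_root_target[OF Q] \<open>length Q = length T\<close> \<open>T \<noteq> []\<close>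
      by (simp add: paste_components_def nth_append id_row_on_def)
    show "row_between D (iface D (paste_top D (\<sigma> ! 1) Q) k) (iface D Q k) (paste_components D Q (\<sigma> ! 1) ! k)"
      if "1 \<le> k" "k \<le> length T" for k
      using paste_top_between[OF Q P \<sigma>1(1) that] .
    show "rowcomp D (paste_top D (\<sigma> ! 1) Q ! i) (paste_components D Q (\<sigma> ! 1) ! i)
      = rowcomp D (paste_components D Q (\<sigma> ! 1) ! Suc i) (Q ! i)" if "i < length T" for i
      using paste_top_squares[OF Q h s(1,4) that] .
    show "rowcomp D r1 (paste_components D Q (\<sigma> ! 1) ! length T) = rowcomp D (\<sigma> ! 2) r2"
      "\<sigma> ! 2 = id_row D (tdom D (cleft D a)) (csrc D a)"
      using \<sigma>1(3,4) \<open>length Q = length T\<close> by (simp_all add: paste_components_def nth_append)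
  qed
  then show ?thesis
    using P by (auto simp: has_decomp_morph_def)
qed

end

section \<open>Induction on the height\<close>

context virtual_double_category
begin

context
  fixes T :: "nat list list" and t :: "nat list"
  assumes height: "2 \<le> length T"
    and lower_unique: "\<And>g. g \<in> Cell D \<Longrightarrow> length (csrc D g) = length t \<Longrightarrow> ess_unique_decomp D g T"
begin

lemma decomp_collapse:
  "is_decomp D a (T @ [t]) Y \<longleftrightarrow> length Y = Suc (length T)
    \<and> is_decomp D (iter_comp D (butlast Y)) T (butlast Y) \<and> is_decomp D a [[length t], t] (collapse D Y)"
proof -
  have "T \<noteq> []"
    using height by auto
  then show ?thesis
    by (rule decomp_snoc_collapse)
qed

lemma same_collapse_equiv:
  assumes Y1: "is_decomp D a (T @ [t]) Y1" and Y2: "is_decomp D a (T @ [t]) Y2"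
    and same: "collapse D Y1 = collapse D Y2"
  shows "decomp_equiv D a (T @ [t]) Y1 Y2"
proof -
  define g where "g = iter_comp D (butlast Y1)"
  have r: "last Y1 = last Y2" and g2: "iter_comp D (butlast Y2) = g"
    using same by (simp_all add: collapse_def g_def)
  have lower: "is_decomp D g T (butlast Y1)" "is_decomp D g T (butlast Y2)"
    and top: "is_decomp D a [[length t], t] [(cleft D g, [g]), last Y1]"
    using Y1 Y2 g2 by (simp_all add: decomp_collapse collapse_def g_def)
  then have "g \<in> Cell D" "length (csrc D g) = length t"
    by (simp_all add: decomp_height2)
  then have "decomp_equiv D g T (butlast Y1) (butlast Y2)"
    using lower lower_unique by (simp add: ess_unique_decomp_def)
  moreover have "T \<noteq> []"
    using height by auto
  ultimately have "decomp_equiv D a (T @ [t]) (butlast Y1 @ [last Y1]) (butlast Y2 @ [last Y1])"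
    using lift_equiv top by blast
  moreover have "Y1 \<noteq> []" "Y2 \<noteq> []"
    using Y1 Y2 by (auto simp: is_decomp_def)
  ultimately show ?thesis
    using r by (metis append_butlast_last_id)
qed

lemma collapse_surj:
  assumes "is_decomp D a [[length t], t] X"
  obtains Y where "is_decomp D a (T @ [t]) Y" "collapse D Y = X"
proof -
  obtain g r where X: "X = [(cleft D g, [g]), r]"
    using height2_decomp_shape[OF assms] by blast
  then have "g \<in> Cell D" "length (csrc D g) = length t"
    using assms by (simp_all add: decomp_height2)
  then obtain Y' where Y': "is_decomp D g T Y'"
    using lower_unique unfolding ess_unique_decomp_def by blast
  then have "length Y' = length T" "iter_comp D Y' = g"
    by (simp_all add: is_decomp_def)
  then show ?thesis
    using that[of "Y' @ [r]"] Y' assms X by (simp add: decomp_collapse collapse_def)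
qed

lemma morph_collapse_equiv:
  assumes m: "has_decomp_morph D a [[length t], t] X X'"
    and Y': "is_decomp D a (T @ [t]) Y'" "collapse D Y' = X'"
  obtains Y where "is_decomp D a (T @ [t]) Y" "collapse D Y = X" "decomp_equiv D a (T @ [t]) Y Y'"
proof -
  obtain \<sigma> where \<sigma>: "decomp_morph D a [[length t], t] X X' \<sigma>"
    using m by (auto simp: has_decomp_morph_def)
  then have "is_decomp D a [[length t], t] X" "is_decomp D a [[length t], t] X'"
    by (simp_all add: decomp_morph_def)
  then obtain g1 r1 g2 r2 where X: "X = [(cleft D g1, [g1]), r1]" and X': "X' = [(cleft D g2, [g2]), r2]"
    using height2_decomp_shape by metis
  have "length Y' = Suc (length T)" "is_decomp D g2 T (butlast Y')" "last Y' = r2"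
    using Y' X' by (auto simp: decomp_collapse collapse_def)
  then have "Y' = butlast Y' @ [r2]" "is_decomp D g2 T (butlast Y')"
    by (metis append_butlast_last_id length_greater_0_conv zero_less_Suc, simp)
  moreover obtain P where P: "is_decomp D g1 T P"
    and PY: "has_decomp_morph D a (T @ [t]) (P @ [r1]) (butlast Y' @ [r2])"
    using paste_top_morph[OF \<sigma>[unfolded X X'] _ height] calculation by metis
  ultimately have "decomp_equiv D a (T @ [t]) (P @ [r1]) Y'"
    by (auto simp: decomp_equiv_eq_equivclp)
  moreover have "is_decomp D a (T @ [t]) (P @ [r1])"
    using PY by (simp add: has_decomp_morph_def decomp_morph_def)
  moreover have "collapse D (P @ [r1]) = X"
    using P X by (simp add: collapse_def is_decomp_def)
  ultimately show ?thesis
    using that by blast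
qed

lemma adjacent_collapse_equiv:
  assumes m: "has_decomp_morph D a [[length t], t] X X' \<or> has_decomp_morph D a [[length t], t] X' X"
    and Y': "is_decomp D a (T @ [t]) Y'" "collapse D Y' = X'"
  obtains Y where "is_decomp D a (T @ [t]) Y" "collapse D Y = X" "decomp_equiv D a (T @ [t]) Y Y'"
  using m
proof
  assume "has_decomp_morph D a [[length t], t] X X'"
  from morph_collapse_equiv[OF this Y'] show ?thesis
    using that .
next
  assume m': "has_decomp_morph D a [[length t], t] X' X"
  then have "is_decomp D a [[length t], t] X"
    by (auto simp: has_decomp_morph_def decomp_morph_def)
  then obtain Y where Y: "is_decomp D a (T @ [t]) Y" "collapse D Y = X"
    using collapse_surj by blast
  obtain Y'' where "is_decomp D a (T @ [t]) Y''" "collapse D Y'' = X'"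
    and "decomp_equiv D a (T @ [t]) Y'' Y"
    using morph_collapse_equiv[OF m' Y] .
  moreover have "decomp_equiv D a (T @ [t]) Y' Y''"
    using same_collapse_equiv[OF Y'(1) calculation(1)] Y'(2) calculation(2) by simp
  ultimately have "decomp_equiv D a (T @ [t]) Y Y'"
    unfolding decomp_equiv_eq_equivclp by (blast intro: equivclp_sym equivclp_trans)
  then show ?thesis
    using that Y by blast
qed

lemma equiv_collapse_equiv:
  assumes "equivclp (has_decomp_morph D a [[length t], t]) X1 X2"
    and "is_decomp D a (T @ [t]) Y1" "collapse D Y1 = X1"
    and "is_decomp D a (T @ [t]) Y2" "collapse D Y2 = X2"
  shows "decomp_equiv D a (T @ [t]) Y1 Y2"
  using assms(1,4,5)
proof (induction arbitrary: Y2)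
  case base
  then show ?case
    using same_collapse_equiv assms(2,3) by simp
next
  case (step X Z)
  obtain Y where "is_decomp D a (T @ [t]) Y" "collapse D Y = X" "decomp_equiv D a (T @ [t]) Y Y2"
    using adjacent_collapse_equiv[OF step.hyps(2) step.prems] .
  then show ?case
    using step.IH unfolding decomp_equiv_eq_equivclp by (blast intro: equivclp_trans)
qed

lemma ess_unique_decomp_snoc:
  assumes "ess_unique_decomp D a [[length t], t]"
  shows "ess_unique_decomp D a (T @ [t])"
  unfolding ess_unique_decomp_def
proof (intro conjI allI impI)
  obtain X where "is_decomp D a [[length t], t] X"
    using assms by (auto simp: ess_unique_decomp_def)
  then obtain Y where "is_decomp D a (T @ [t]) Y"
    using collapse_surj by blast
  then show "\<exists>Y. is_decomp D a (T @ [t]) Y" ..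
  fix Y1 Y2
  assume "is_decomp D a (T @ [t]) Y1 \<and> is_decomp D a (T @ [t]) Y2"
  moreover from this have "decomp_equiv D a [[length t], t] (collapse D Y1) (collapse D Y2)"
    using assms by (simp add: decomp_collapse ess_unique_decomp_def)
  ultimately show "decomp_equiv D a (T @ [t]) Y1 Y2"
    using equiv_collapse_equiv by (simp add: decomp_equiv_eq_equivclp)
qed

end

lemma ess_unique_decomp_all_heights:
  assumes height2: "\<And>a T. a \<in> Cell D \<Longrightarrow> valid_tree T \<Longrightarrow> length T = 2 \<Longrightarrow>
      tree_leaves T = length (csrc D a) \<Longrightarrow> ess_unique_decomp D a T"
  shows "a \<in> Cell D \<Longrightarrow> valid_tree T \<Longrightarrow> 2 \<le> length T \<Longrightarrow> tree_leaves T = length (csrc D a) \<Longrightarrow>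
    ess_unique_decomp D a T"
proof (induction T arbitrary: a rule: rev_induct)
  case (snoc t T)
  show ?case
  proof (cases "length T = 1")
    case True
    then show ?thesis
      using snoc.prems height2 by simp
  next
    case False
    then have "2 \<le> length T" "T \<noteq> []"
      using snoc.prems(3) by auto
    then have T: "valid_tree T" "length t = tree_leaves T"
      using snoc.prems(2) valid_tree_snoc by (simp_all add: tree_leaves_def)
    have "ess_unique_decomp D a [[length t], t]"
      using height2 snoc.prems(1,4) valid_tree_height2 by (simp add: tree_leaves_def)
    then show ?thesis
      using ess_unique_decomp_snoc[OF \<open>2 \<le> length T\<close>] snoc.IH \<open>2 \<le> length T\<close> T by simp
  qed
qed simp

end

theorem corollary4p11:
  fixes D :: "('o, 't, 'l, 'c, 'm) vdc_scheme"
  assumes "vdc D"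
  shows "has_decomposable_multicells D \<longleftrightarrow>
    (\<forall>a \<in> Cell D. \<forall>T. valid_tree T \<and> tree_height T = 2 \<and> tree_leaves T = length (csrc D a)
        \<longrightarrow> ess_unique_decomp D a T)"
proof -
  interpret virtual_double_category D
    by (rule virtual_double_category.intro) (fact assms)
  show ?thesis
    unfolding has_decomposable_multicells_def tree_height_def
    using ess_unique_decomp_all_heights by auto
qed

end
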